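(* Let $z^{(L)}:\mathbb{R}^{n_0}\to\mathbb{R}$ be a scalar-valued $L$-layer network given by $a^{(0)}=x$, $z^{(k)}=W^{(k)}a^{(k-1)}+b^{(k)}$, $a^{(k)}=\sigma^{(k)}(z^{(k)})$ for $k=1,\dots,L-1$, and $z^{(L)}=W^{(L)}a^{(L-1)}+b^{(L)}$ with $W^{(L)}\in\mathbb{R}^{1\times n_{L-1}}$, where each activation $\sigma^{(k)}_i$ is differentiable and slope-restricted in $[\alpha^{(k)}_i,\beta^{(k)}_i]$ with $0\le\alpha^{(k)}_i\le\beta^{(k)}_i<\infty$. Fix $l\in\{1,\dots,L-1\}$ and regard $z^{(L)}$ as a function of $a^{(l)}$ through layers $l+1,\dots,L$. Define matrices $S^{(k,l)}$ for $k=l+1,\dots,L$ by $$S^{(l+1,l)}=|W^{(l+1)}|,\qquad S^{(k,l)}=|W^{(k)}|\,\mathrm{diag}(\beta^{(k-1)})\,S^{(k-1,l)}\quad (k\ge l+2).$$ Then $\Big\|\big(\frac{\partial z^{(L)}}{\partial a^{(l)}}\big)^\top\Big\|_\infty\le\|S^{(L,l)}\|_\infty$ at every point.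
   Context: $|A|$ denotes the elementwise absolute value of a matrix $A$. A function $\sigma:\mathbb{R}\to\mathbb{R}$ is slope-restricted in $[\alpha,\beta]$ if $\alpha\le\frac{\sigma(x)-\sigma(y)}{x-y}\le\beta$ for all $x\ne y$. For a matrix $A$, $\|A\|_\infty$ is the induced $\ell_\infty$ operator norm (maximum absolute row sum). *)

theory Defs
  imports "HOL-Analysis.Analysis"
begin

text \<open>Vectors in R^n are functions nat => real (only indices < n matter);
  m x n matrices are functions nat => nat => real (row i < m, column j < n).\<close>

definition slope_restricted :: "(real \<Rightarrow> real) \<Rightarrow> real \<Rightarrow> real \<Rightarrow> bool" where
  "slope_restricted f \<alpha> \<beta> \<longleftrightarrow>
     (\<forall>x y. x \<noteq> y \<longrightarrow> \<alpha> \<le> (f x - f y) / (x - y) \<and> (f x - f y) / (x - y) \<le> \<beta>)"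

definition mat_inf_norm :: "nat \<Rightarrow> nat \<Rightarrow> (nat \<Rightarrow> nat \<Rightarrow> real) \<Rightarrow> real" where
  "mat_inf_norm m n A = Max {(\<Sum>j<n. \<bar>A i j\<bar>) | i. i < m}"

text \<open>Forward pass starting from layer l: layer_act ... l m a is the post-activation
  a^(l+m), given a^(l) = a.\<close>
fun layer_act :: "(nat \<Rightarrow> nat) \<Rightarrow> (nat \<Rightarrow> nat \<Rightarrow> nat \<Rightarrow> real) \<Rightarrow> (nat \<Rightarrow> nat \<Rightarrow> real)
    \<Rightarrow> (nat \<Rightarrow> nat \<Rightarrow> real \<Rightarrow> real) \<Rightarrow> nat \<Rightarrow> nat \<Rightarrow> (nat \<Rightarrow> real) \<Rightarrow> (nat \<Rightarrow> real)" where
  "layer_act n W b \<sigma> l 0 a = a"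
| "layer_act n W b \<sigma> l (Suc m) a =
     (\<lambda>i. if i < n (l + Suc m)
          then \<sigma> (l + Suc m) i ((\<Sum>j<n (l + m). W (l + Suc m) i j * layer_act n W b \<sigma> l m a j)
                                 + b (l + Suc m) i)
          else 0)"

definition net_out :: "(nat \<Rightarrow> nat) \<Rightarrow> (nat \<Rightarrow> nat \<Rightarrow> nat \<Rightarrow> real) \<Rightarrow> (nat \<Rightarrow> nat \<Rightarrow> real)
    \<Rightarrow> (nat \<Rightarrow> nat \<Rightarrow> real \<Rightarrow> real) \<Rightarrow> nat \<Rightarrow> nat \<Rightarrow> (nat \<Rightarrow> real) \<Rightarrow> real" where
  "net_out n W b \<sigma> L l a =
     (\<Sum>j<n (L - 1). W L 0 j * layer_act n W b \<sigma> l (L - 1 - l) a j) + b L 0"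

text \<open>S_mat ... l m = S^(l+1+m, l):
  S^(l+1,l) = |W^(l+1)|, S^(k,l) = |W^(k)| diag(beta^(k-1)) S^(k-1,l).\<close>
fun S_mat :: "(nat \<Rightarrow> nat) \<Rightarrow> (nat \<Rightarrow> nat \<Rightarrow> nat \<Rightarrow> real) \<Rightarrow> (nat \<Rightarrow> nat \<Rightarrow> real)
    \<Rightarrow> nat \<Rightarrow> nat \<Rightarrow> (nat \<Rightarrow> nat \<Rightarrow> real)" where
  "S_mat n W \<beta> l 0 = (\<lambda>i j. \<bar>W (l + 1) i j\<bar>)"
| "S_mat n W \<beta> l (Suc m) =
     (\<lambda>i j. \<Sum>p<n (l + 1 + m). \<bar>W (l + 2 + m) i p\<bar> * \<beta> (l + 1 + m) p * S_mat n W \<beta> l m p j)"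

end

theory Submission
  imports Defs
begin

text \<open>Differentiate along the coordinate direction e_j of a^(l), one layer at a time. Slope
  restriction in [alpha, beta] with alpha \<ge> 0 forces 0 \<le> sigma' \<le> beta, so the chain rule and
  the triangle inequality give |dz^(k)_i / da^(l)_j| \<le> S^(k,l)_ij by induction on k. The output
  is scalar, so the infinity norm of the transposed gradient is its largest entry, which is
  dominated by the row sum of S^(L,l).\<close>

lemma slope_restricted_deriv_bounds:
  assumes "slope_restricted f \<alpha> \<beta>" and "(f has_real_derivative D) (at x)"
  shows "\<alpha> \<le> D \<and> D \<le> \<beta>"
proof -
  have lim: "((\<lambda>h. (f (x + h) - f x) / h) \<longlongrightarrow> D) (at 0)"
    using assms(2) by (simp add: DERIV_def)
  have "\<forall>\<^sub>F h in at 0. h \<noteq> (0::real)"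
    by (simp add: eventually_at_filter)
  then have quotient_bounds: "\<forall>\<^sub>F h in at 0. \<alpha> \<le> (f (x + h) - f x) / h \<and> (f (x + h) - f x) / h \<le> \<beta>"
    by eventually_elim
      (use assms(1) in \<open>metis slope_restricted_def add_diff_cancel_left' add_cancel_right_right\<close>)
  have "\<alpha> \<le> D"
    by (rule tendsto_lowerbound[OF lim]) (use quotient_bounds in \<open>auto elim: eventually_mono\<close>)
  moreover have "D \<le> \<beta>"
    by (rule tendsto_upperbound[OF lim]) (use quotient_bounds in \<open>auto elim: eventually_mono\<close>)
  ultimately show ?thesis ..
qed

lemma slope_restricted_abs_deriv_le:
  assumes "slope_restricted f \<alpha> \<beta>" and "0 \<le> \<alpha>" and "f differentiable (at x)"
  shows "\<exists>d. (f has_real_derivative d) (at x) \<and> \<bar>d\<bar> \<le> \<beta>"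
proof -
  obtain d where d: "(f has_real_derivative d) (at x)"
    using assms(3) real_differentiable_def by blast
  moreover have "\<alpha> \<le> d \<and> d \<le> \<beta>"
    using slope_restricted_deriv_bounds[OF assms(1) d] .
  ultimately show ?thesis
    using assms(2) by auto
qed

lemma DERIV_affine_combination_abs_bound:
  assumes "\<And>p. p < N \<Longrightarrow> \<exists>D. (g p has_real_derivative D) (at x) \<and> \<bar>D\<bar> \<le> c p"
  shows "\<exists>D. ((\<lambda>t. (\<Sum>p<N. w p * g p t) + b) has_real_derivative D) (at x)
             \<and> \<bar>D\<bar> \<le> (\<Sum>p<N. \<bar>w p\<bar> * c p)"
proof -
  obtain D where D: "\<And>p. p < N \<Longrightarrow> (g p has_real_derivative D p) (at x) \<and> \<bar>D p\<bar> \<le> c p"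
    using assms by metis
  have "((\<lambda>t. (\<Sum>p<N. w p * g p t) + b) has_real_derivative (\<Sum>p<N. w p * D p) + 0) (at x)"
    by (intro DERIV_add DERIV_sum DERIV_cmult DERIV_const) (use D in auto)
  moreover have "\<bar>\<Sum>p<N. w p * D p\<bar> \<le> (\<Sum>p<N. \<bar>w p\<bar> * c p)"
  proof -
    have "\<bar>\<Sum>p<N. w p * D p\<bar> \<le> (\<Sum>p<N. \<bar>w p\<bar> * \<bar>D p\<bar>)"
      using sum_abs[of "\<lambda>p. w p * D p" "{..<N}"] by (simp add: abs_mult)
    also have "\<dots> \<le> (\<Sum>p<N. \<bar>w p\<bar> * c p)"
      using D by (intro sum_mono mult_left_mono) auto
    finally show ?thesis .
  qed
  ultimately show ?thesis by auto
qed

lemma DERIV_comp_abs_bound: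
  assumes f': "\<forall>z. \<exists>d. (f has_real_derivative d) (at z) \<and> \<bar>d\<bar> \<le> \<beta>"
    and g': "\<exists>D. (g has_real_derivative D) (at x) \<and> \<bar>D\<bar> \<le> c"
  shows "\<exists>D. ((\<lambda>t. f (g t)) has_real_derivative D) (at x) \<and> \<bar>D\<bar> \<le> \<beta> * c"
proof -
  obtain D where D: "(g has_real_derivative D) (at x)" "\<bar>D\<bar> \<le> c"
    using g' by blast
  obtain d where d: "(f has_real_derivative d) (at (g x))" "\<bar>d\<bar> \<le> \<beta>"
    using f' by blast
  have "((\<lambda>t. f (g t)) has_real_derivative d * D) (at x)"
    using DERIV_chain2[OF d(1) D(1)] .
  moreover have "\<bar>d * D\<bar> \<le> \<beta> * c"
    unfolding abs_mult using d(2) D(2) by (intro mult_mono) auto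
  ultimately show ?thesis by blast
qed

text \<open>pre_act n W b \<sigma> l m a is the pre-activation z^(l+1+m), given a^(l) = a.\<close>
definition pre_act :: "(nat \<Rightarrow> nat) \<Rightarrow> (nat \<Rightarrow> nat \<Rightarrow> nat \<Rightarrow> real) \<Rightarrow> (nat \<Rightarrow> nat \<Rightarrow> real)
    \<Rightarrow> (nat \<Rightarrow> nat \<Rightarrow> real \<Rightarrow> real) \<Rightarrow> nat \<Rightarrow> nat \<Rightarrow> (nat \<Rightarrow> real) \<Rightarrow> nat \<Rightarrow> real" where
  "pre_act n W b \<sigma> l m a i =
     (\<Sum>p<n (l + m). W (Suc (l + m)) i p * layer_act n W b \<sigma> l m a p) + b (Suc (l + m)) i"

lemma layer_act_Suc_pre_act:
  "layer_act n W b \<sigma> l (Suc m) a i =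
     (if i < n (l + Suc m) then \<sigma> (l + Suc m) i (pre_act n W b \<sigma> l m a i) else 0)"
  by (simp add: pre_act_def)

lemma net_out_eq_pre_act:
  assumes "l < L"
  shows "net_out n W b \<sigma> L l a = pre_act n W b \<sigma> l (L - 1 - l) a 0"
proof -
  have "l + (L - 1 - l) = L - 1" and "Suc (L - 1) = L"
    using assms by auto
  then show ?thesis
    unfolding net_out_def pre_act_def by simp
qed

lemma pre_act_partial_deriv_abs_le_S_mat:
  assumes "\<forall>k\<in>{Suc l..l + m}. \<forall>i<n k. \<forall>x. \<exists>d. (\<sigma> k i has_real_derivative d) (at x) \<and> \<bar>d\<bar> \<le> \<beta> k i"
  shows "\<exists>D. ((\<lambda>t. pre_act n W b \<sigma> l m (a(j := a j + t)) i) has_real_derivative D) (at 0)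
             \<and> \<bar>D\<bar> \<le> S_mat n W \<beta> l m i j"
  using assms
proof (induction m arbitrary: i)
  case 0
  have "\<exists>D. ((\<lambda>t. (\<Sum>p<n l. W (Suc l) i p * (a(j := a j + t)) p) + b (Suc l) i)
             has_real_derivative D) (at 0)
           \<and> \<bar>D\<bar> \<le> (\<Sum>p<n l. \<bar>W (Suc l) i p\<bar> * (if p = j then 1 else 0))"
  proof (rule DERIV_affine_combination_abs_bound)
    fix p
    have "((\<lambda>t. (a(j := a j + t)) p) has_real_derivative (if p = j then 1 else 0)) (at 0)"
      by (cases "p = j") (auto intro!: derivative_eq_intros)
    then show "\<exists>D. ((\<lambda>t. (a(j := a j + t)) p) has_real_derivative D) (at 0)
                 \<and> \<bar>D\<bar> \<le> (if p = j then 1 else 0)"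
      by force
  qed
  moreover have "(\<Sum>p<n l. \<bar>W (Suc l) i p\<bar> * (if p = j then 1 else 0)) \<le> \<bar>W (Suc l) i j\<bar>"
    by (simp add: if_distrib sum.delta cong: if_cong)
  ultimately show ?case
    unfolding pre_act_def by force
next
  case (Suc m)
  let ?k = "l + Suc m"
  have "\<exists>D. ((\<lambda>t. (\<Sum>p<n ?k. W (Suc ?k) i p * layer_act n W b \<sigma> l (Suc m) (a(j := a j + t)) p)
               + b (Suc ?k) i) has_real_derivative D) (at 0)
           \<and> \<bar>D\<bar> \<le> (\<Sum>p<n ?k. \<bar>W (Suc ?k) i p\<bar> * (\<beta> ?k p * S_mat n W \<beta> l m p j))"
  proof (rule DERIV_affine_combination_abs_bound)
    fix p
    assume p: "p < n ?k"
    have "\<forall>z. \<exists>d. (\<sigma> ?k p has_real_derivative d) (at z) \<and> \<bar>d\<bar> \<le> \<beta> ?k p"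
      using Suc.prems p by simp
    moreover have "\<exists>D. ((\<lambda>t. pre_act n W b \<sigma> l m (a(j := a j + t)) p) has_real_derivative D) (at 0)
                     \<and> \<bar>D\<bar> \<le> S_mat n W \<beta> l m p j"
      using Suc.prems by (intro Suc.IH) auto
    ultimately have "\<exists>D. ((\<lambda>t. \<sigma> ?k p (pre_act n W b \<sigma> l m (a(j := a j + t)) p))
                         has_real_derivative D) (at 0) \<and> \<bar>D\<bar> \<le> \<beta> ?k p * S_mat n W \<beta> l m p j"
      by (rule DERIV_comp_abs_bound)
    then show "\<exists>D. ((\<lambda>t. layer_act n W b \<sigma> l (Suc m) (a(j := a j + t)) p)
                         has_real_derivative D) (at 0) \<and> \<bar>D\<bar> \<le> \<beta> ?k p * S_mat n W \<beta> l m p j"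
      using p by (simp add: layer_act_Suc_pre_act del: layer_act.simps)
  qed
  then show ?case
    unfolding pre_act_def by (simp add: mult.assoc)
qed

lemma mat_inf_norm_column_le_row:
  assumes "0 < N" and "\<And>i. i < N \<Longrightarrow> \<bar>G i\<bar> \<le> A 0 i"
  shows "mat_inf_norm N 1 (\<lambda>i _. G i) \<le> mat_inf_norm 1 N A"
proof -
  have "Max {\<bar>G i\<bar> | i. i < N} \<le> (\<Sum>j<N. \<bar>A 0 j\<bar>)"
  proof (rule Max.boundedI)
    show "{\<bar>G i\<bar> | i. i < N} \<noteq> {}"
      using assms(1) by blast
    fix y
    assume "y \<in> {\<bar>G i\<bar> | i. i < N}"
    then obtain i where i: "i < N" and y: "y = \<bar>G i\<bar>"
      by blast
    have "\<bar>G i\<bar> \<le> \<bar>A 0 i\<bar>"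
      using assms(2)[OF i] by linarith
    also have "\<dots> \<le> (\<Sum>j<N. \<bar>A 0 j\<bar>)"
      by (rule member_le_sum) (use i in auto)
    finally show "y \<le> (\<Sum>j<N. \<bar>A 0 j\<bar>)"
      using y by simp
  qed simp
  then show ?thesis
    unfolding mat_inf_norm_def by simp
qed

theorem proposition2:
  fixes n :: "nat \<Rightarrow> nat"
    and W :: "nat \<Rightarrow> nat \<Rightarrow> nat \<Rightarrow> real"
    and b :: "nat \<Rightarrow> nat \<Rightarrow> real"
    and \<sigma> :: "nat \<Rightarrow> nat \<Rightarrow> real \<Rightarrow> real"
    and \<alpha> \<beta> :: "nat \<Rightarrow> nat \<Rightarrow> real"
    and L l :: nat
    and a :: "nat \<Rightarrow> real"
  assumes widths: "\<forall>k\<le>L. n k \<ge> 1"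
    and scalar_out: "n L = 1"
    and l_range: "1 \<le> l" "l \<le> L - 1"
    and diff: "\<forall>k\<in>{1..L-1}. \<forall>i<n k. \<forall>x. \<sigma> k i differentiable (at x)"
    and slope: "\<forall>k\<in>{1..L-1}. \<forall>i<n k. slope_restricted (\<sigma> k i) (\<alpha> k i) (\<beta> k i)"
    and bounds: "\<forall>k\<in>{1..L-1}. \<forall>i<n k. 0 \<le> \<alpha> k i \<and> \<alpha> k i \<le> \<beta> k i"
  shows "\<exists>G :: nat \<Rightarrow> real.
           (\<forall>j<n l. ((\<lambda>t. net_out n W b \<sigma> L l (a(j := a j + t))) has_real_derivative G j) (at 0))
         \<and> mat_inf_norm (n l) 1 (\<lambda>i _. G i) \<le> mat_inf_norm 1 (n l) (S_mat n W \<beta> l (L - l - 1))"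
proof -
  have activation_derivs:
    "\<forall>k\<in>{Suc l..l + (L - 1 - l)}. \<forall>i<n k. \<forall>x.
       \<exists>d. (\<sigma> k i has_real_derivative d) (at x) \<and> \<bar>d\<bar> \<le> \<beta> k i"
  proof (intro ballI allI impI)
    fix k i x
    assume "k \<in> {Suc l..l + (L - 1 - l)}" and "i < n k"
    then have "k \<in> {1..L-1}" and "i < n k" by auto
    then show "\<exists>d. (\<sigma> k i has_real_derivative d) (at x) \<and> \<bar>d\<bar> \<le> \<beta> k i"
      using diff slope bounds by (blast intro: slope_restricted_abs_deriv_le)
  qed
  have "\<forall>j. \<exists>D. ((\<lambda>t. net_out n W b \<sigma> L l (a(j := a j + t))) has_real_derivative D) (at 0)
              \<and> \<bar>D\<bar> \<le> S_mat n W \<beta> l (L - l - 1) 0 j"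
    using pre_act_partial_deriv_abs_le_S_mat[OF activation_derivs] net_out_eq_pre_act l_range
    by (simp add: diff_commute[of L 1 l])
  then obtain G where G: "\<And>j. ((\<lambda>t. net_out n W b \<sigma> L l (a(j := a j + t))) has_real_derivative G j) (at 0)"
    and G_bound: "\<And>j. \<bar>G j\<bar> \<le> S_mat n W \<beta> l (L - l - 1) 0 j"
    by metis
  have "l \<le> L"
    using l_range by linarith
  then have "0 < n l"
    using widths by fastforce
  with G G_bound show ?thesis
    by (blast intro: mat_inf_norm_column_le_row)
qed

end
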